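(* Let $A\in\mathbb{R}^{N\times N}$, $b^{ex},e\in\mathbb{R}^N$ with $e\neq 0$, and $b=b^{ex}+e$. For each $m$ let $r_m^{ex}=p_m^{ex}(A)b^{ex}$ be the $m$-th residual of GMRES applied to $Ax=b^{ex}$, where $p_m^{ex}$ is the corresponding GMRES residual polynomial (of degree at most $m$, with $p_m^{ex}(0)=1$). Assume there exist $m^*$ and $\eta^*$ such that $\|p_m^{ex}(A)\|\le\eta^*$ for all $m\ge m^*$. Then for every $m\ge m^*$ the $m$-th residual $r_m$ of GMRES applied to $Ax=b$ satisfies \[ \|r_m\|\le\eta\|e\|,\qquad \eta=\frac{\|r_{m^*}^{ex}\|}{\|e\|}+\eta^*. \]
   Context: GMRES with zero initial guess applied to $Ax=b$: the $m$-th iterate $x_m\in\mathcal{K}_m(A,b)=\mathrm{span}\{b,Ab,\dots,A^{m-1}b\}$ minimizes $\|b-Ax\|$ over this subspace, so $r_m=b-Ax_m=p_m(A)b$ with $\|r_m\|=\min\{\|p(A)b\|: p \text{ polynomial of degree}\le m,\ p(0)=1\}$. Norms are Euclidean (spectral for matrices). *)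

theory Defs
  imports "HOL-Analysis.Analysis" "HOL-Computational_Algebra.Polynomial"
begin

definition mat_pow :: "real^'n^'n \<Rightarrow> nat \<Rightarrow> real^'n^'n" where
  "mat_pow A i = ((\<lambda>M. A ** M) ^^ i) (mat 1)"

definition poly_mat :: "real poly \<Rightarrow> real^'n^'n \<Rightarrow> real^'n^'n" where
  "poly_mat p A = (\<Sum>i\<le>degree p. coeff p i *\<^sub>R mat_pow A i)"

definition mat_norm :: "real^'n^'n \<Rightarrow> real" where
  "mat_norm M = onorm (\<lambda>x. M *v x)"

definition res_polys :: "nat \<Rightarrow> real poly set" where
  "res_polys m = {p. degree p \<le> m \<and> poly p 0 = 1}"

definition is_gmres_poly :: "real^'n^'n \<Rightarrow> real^'n \<Rightarrow> nat \<Rightarrow> real poly \<Rightarrow> bool" where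
  "is_gmres_poly A b m p \<longleftrightarrow> p \<in> res_polys m \<and>
     (\<forall>q\<in>res_polys m. norm (poly_mat p A *v b) \<le> norm (poly_mat q A *v b))"

text \<open>Norm of the m-th GMRES residual for A x = b (zero initial guess).\<close>
definition gmres_res_norm :: "real^'n^'n \<Rightarrow> real^'n \<Rightarrow> nat \<Rightarrow> real" where
  "gmres_res_norm A b m = Inf ((\<lambda>p. norm (poly_mat p A *v b)) ` res_polys m)"

end

theory Submission
  imports Defs
begin

text \<open>Since the residual polynomials are nested, the step-\<open>m\<close> GMRES polynomial \<open>p\<^sub>m\<close> for
  \<open>b\<^sup>e\<^sup>x\<close> does at least as well on \<open>b\<^sup>e\<^sup>x\<close> as \<open>p\<^sub>m\<^sub>*\<close>. Using \<open>p\<^sub>m\<close> as a competitor for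
  \<open>b = b\<^sup>e\<^sup>x + e\<close> gives \<open>\<parallel>r\<^sub>m\<parallel> \<le> \<parallel>p\<^sub>m(A) b\<^sup>e\<^sup>x\<parallel> + \<parallel>p\<^sub>m(A)\<parallel> \<parallel>e\<parallel> \<le> \<parallel>r\<^sup>e\<^sup>x\<^sub>m\<^sub>*\<parallel> + \<eta>\<^sup>* \<parallel>e\<parallel>\<close>.\<close>

lemma norm_matrix_vector_mult_le_mat_norm:
  "norm (M *v x) \<le> mat_norm M * norm x"
  unfolding mat_norm_def by (rule onorm[OF matrix_vector_mul_bounded_linear])

lemma res_polys_mono: "m \<le> n \<Longrightarrow> res_polys m \<subseteq> res_polys n"
  unfolding res_polys_def by auto

lemma gmres_res_norm_le:
  assumes "p \<in> res_polys m"
  shows "gmres_res_norm A b m \<le> norm (poly_mat p A *v b)"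
  unfolding gmres_res_norm_def
  by (rule cInf_lower) (use assms in \<open>auto intro: bdd_belowI[where m=0]\<close>)

lemma is_gmres_poly_le_earlier:
  assumes "is_gmres_poly A b n p" and "q \<in> res_polys m" and "m \<le> n"
  shows "norm (poly_mat p A *v b) \<le> norm (poly_mat q A *v b)"
  using assms res_polys_mono unfolding is_gmres_poly_def by blast

lemma is_gmres_poly_in_res_polys: "is_gmres_poly A b m p \<Longrightarrow> p \<in> res_polys m"
  unfolding is_gmres_poly_def by blast

theorem proposition1:
  fixes A :: "real^'n^'n" and bex e b :: "real^'n"
    and pex :: "nat \<Rightarrow> real poly" and mstar :: nat and etastar :: real
  assumes "e \<noteq> 0"
    and "b = bex + e"
    and "\<And>m. is_gmres_poly A bex m (pex m)"
    and "\<And>m. m \<ge> mstar \<Longrightarrow> mat_norm (poly_mat (pex m) A) \<le> etastar"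
  shows "\<forall>m\<ge>mstar. gmres_res_norm A b m \<le>
           (norm (poly_mat (pex mstar) A *v bex) / norm e + etastar) * norm e"
proof (intro allI impI)
  fix m assume m: "m \<ge> mstar"
  let ?M = "poly_mat (pex m) A"
  have "gmres_res_norm A b m \<le> norm (?M *v b)"
    by (rule gmres_res_norm_le[OF is_gmres_poly_in_res_polys[OF assms(3)[of m]]])
  also have "\<dots> = norm (?M *v bex + ?M *v e)"
    using assms(2) by (simp add: matrix_vector_right_distrib)
  also have "\<dots> \<le> norm (?M *v bex) + mat_norm ?M * norm e"
    using norm_triangle_ineq[of "?M *v bex" "?M *v e"]
      norm_matrix_vector_mult_le_mat_norm[of ?M e] by linarith
  also have "\<dots> \<le> norm (poly_mat (pex mstar) A *v bex) + etastar * norm e"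
    using is_gmres_poly_le_earlier[OF assms(3)[of m] is_gmres_poly_in_res_polys[OF assms(3)[of mstar]] m]
      assms(4)[OF m] by (simp add: add_mono mult_right_mono)
  also have "\<dots> = (norm (poly_mat (pex mstar) A *v bex) / norm e + etastar) * norm e"
    using assms(1) by (simp add: field_simps)
  finally show "gmres_res_norm A b m \<le>
      (norm (poly_mat (pex mstar) A *v bex) / norm e + etastar) * norm e" .
qed

end
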